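(* Let $(M,g)$ be a four-dimensional oriented smooth Lorentzian manifold with Levi-Civita connection $\nabla$ and a smooth vector field $\tau^\mu$ with $\tau^\mu\tau_\mu=1$. Let $K^\nu$ be a smooth vector field with values in $\mathrm{Herm}(2)$ such that $K^\mu\tilde K^\nu+K^\nu\tilde K^\mu=2g^{\mu\nu}e$, $\nabla_\mu\pi_+(K^\mu)=0$ and $\pi_+(K^\nu)=\tau^\nu e$; set $L^\nu:=\pi_-(K^\nu)$. Let $C_\lambda$ be a smooth covector field with values in $\mathfrak{su}(2)$, and let $\varkappa_{\lambda\mu}{}^{\nu}$ be a smooth real tensor field with $\varkappa_{\lambda\mu}{}^{\lambda}=0$ and $\varkappa_{\lambda\mu\nu}=-\varkappa_{\lambda\nu\mu}$. If $$\nabla_\lambda L^\nu-[C_\lambda,L^\nu]=\varkappa_{\lambda\mu}{}^{\nu}L^\mu\quad\text{for all }\lambda,\nu,$$ then $$C_\lambda=-\tfrac14\big((\nabla_\lambda L^\nu)L_\nu-\varkappa_{\lambda\mu\nu}L^\mu L^\nu\big).$$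
   Context: Greek indices are raised/lowered with $g$ and repeated indices are summed. $e$ is the $2\times2$ identity matrix; $\mathrm{Herm}(2)$ is the set of Hermitian $2\times2$ matrices; $\mathfrak{su}(2)$ is the set of traceless anti-Hermitian $2\times2$ matrices. For $A\in\mathrm{Mat}(2,\mathbb{C})$: $\pi_+(A)=\tfrac12(\operatorname{tr}A)e$, $\pi_-(A)=A-\pi_+(A)$, $\tilde A=\pi_+(A)-\pi_-(A)$. Products of matrix-valued tensor fields are matrix products of their components; the covariant derivative of a matrix-valued tensor field $V=v_a\sigma^a$ (Pauli basis $\sigma^0=e,\sigma^1,\sigma^2,\sigma^3$, complex tensor fields $v_a$) is $(\nabla v_a)\sigma^a$. *)

theory Defs
  imports "HOL-Analysis.Analysis"
begin

text \<open>Local (coordinate chart) rendering: the manifold is an open set U of R^4,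
 indices range over the finite type 4, 2x2 complex matrices are complex^2^2.\<close>

type_synonym pt = "real^4"
type_synonym cmat = "complex^2^2"

definition pd :: "(pt \<Rightarrow> 'a::real_normed_vector) \<Rightarrow> 4 \<Rightarrow> pt \<Rightarrow> 'a" where
  "pd f mu x = vector_derivative (\<lambda>t::real. f (x + t *\<^sub>R axis mu 1)) (at 0)"

fun ipd :: "4 list \<Rightarrow> (pt \<Rightarrow> 'a::real_normed_vector) \<Rightarrow> pt \<Rightarrow> 'a" where
  "ipd [] f = f"
| "ipd (mu # ms) f = pd (ipd ms f) mu"

definition smooth_on :: "pt set \<Rightarrow> (pt \<Rightarrow> 'a::real_normed_vector) \<Rightarrow> bool" where
  "smooth_on U f \<longleftrightarrow> (\<forall>ms. ipd ms f differentiable_on U)"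

definition minkowski :: "real^4^4" where
  "minkowski = (\<chi> i j. if i = j then (if i = 0 then 1 else -1) else 0)"

definition lorentzian_metric :: "pt set \<Rightarrow> (pt \<Rightarrow> real^4^4) \<Rightarrow> bool" where
  "lorentzian_metric U g \<longleftrightarrow> open U \<and>
     (\<forall>i j. smooth_on U (\<lambda>x. g x $ i $ j)) \<and>
     (\<forall>x\<in>U. transpose (g x) = g x \<and>
        (\<exists>P. invertible P \<and> transpose P ** g x ** P = minkowski))"

definition ginv :: "(pt \<Rightarrow> real^4^4) \<Rightarrow> pt \<Rightarrow> real^4^4" where
  "ginv g x = matrix_inv (g x)"

definition christoffel :: "(pt \<Rightarrow> real^4^4) \<Rightarrow> pt \<Rightarrow> 4 \<Rightarrow> 4 \<Rightarrow> 4 \<Rightarrow> real" where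
  "christoffel g x rho mu nu = (1/2) * (\<Sum>s\<in>UNIV. ginv g x $ rho $ s *
     (pd (\<lambda>y. g y $ s $ nu) mu x + pd (\<lambda>y. g y $ s $ mu) nu x - pd (\<lambda>y. g y $ mu $ nu) s x))"

definition covD :: "(pt \<Rightarrow> real^4^4) \<Rightarrow> (pt \<Rightarrow> 4 \<Rightarrow> 'a::real_normed_vector) \<Rightarrow> 4 \<Rightarrow> 4 \<Rightarrow> pt \<Rightarrow> 'a" where
  "covD g V lam nu x = pd (\<lambda>y. V y nu) lam x + (\<Sum>mu\<in>UNIV. christoffel g x nu lam mu *\<^sub>R V x mu)"

definition mtrace :: "cmat \<Rightarrow> complex" where
  "mtrace A = (\<Sum>i\<in>UNIV. A $ i $ i)"

definition herm :: "cmat \<Rightarrow> bool" where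
  "herm A \<longleftrightarrow> (\<forall>i j. A $ i $ j = cnj (A $ j $ i))"

definition su2 :: "cmat \<Rightarrow> bool" where
  "su2 A \<longleftrightarrow> mtrace A = 0 \<and> (\<forall>i j. A $ i $ j = - cnj (A $ j $ i))"

definition pip :: "cmat \<Rightarrow> cmat" where
  "pip A = mat (mtrace A / 2)"

definition pim :: "cmat \<Rightarrow> cmat" where
  "pim A = A - pip A"

definition tilde :: "cmat \<Rightarrow> cmat" where
  "tilde A = pip A - pim A"

definition comm :: "cmat \<Rightarrow> cmat \<Rightarrow> cmat" where
  "comm A B = A ** B - B ** A"

end

theory Submission
  imports Defs
begin

text \<open>Expand each Hermitian K^nu = N^nu_a sigma^a in the Pauli basis. Since
  sigma^a tilde(sigma^b) + sigma^b tilde(sigma^a) = 2 eta^ab e, the Clifford relation says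
  N eta N^T = g^-1, i.e. N is a tetrad: N^T g N = eta. Hence
  L^nu X L_nu = - (sum over a = 1..3 of sigma^a X sigma^a) = X - 2 (tr X) e, which is -3 e for
  X = e and X for traceless X. Contracting the equation for nabla L with L_nu therefore gives
  [C, L^nu] L_nu = -4 C, and solving for C yields the formula.\<close>

lemma matrix_mult_add_left:
  "(A + B) ** (C::'a::semiring_1^'n^'m) = A ** C + B ** C"
  by (simp add: matrix_matrix_mult_def vec_eq_iff distrib_right sum.distrib)

lemma matrix_mult_sum_left:
  "(\<Sum>a\<in>A. f a) ** (B::'a::semiring_1^'n^'m) = (\<Sum>a\<in>A. f a ** B)"
  by (induct A rule: infinite_finite_induct) (auto simp: matrix_mult_add_left)

lemma matrix_mult_sum_right:
  "(B::'a::semiring_1^'n^'m) ** (\<Sum>a\<in>A. f a) = (\<Sum>a\<in>A. B ** f a)"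
  by (induct A rule: infinite_finite_induct) (auto simp: matrix_add_ldistrib)

lemma matrix_mult_scaleR_left:
  "(c *\<^sub>R A) ** (B::'a::real_algebra_1^'n^'m) = c *\<^sub>R (A ** B)"
  by (simp add: matrix_matrix_mult_def vec_eq_iff scaleR_sum_right)

lemma matrix_mult_scaleR_right:
  "(A::'a::real_algebra_1^'n^'m) ** (c *\<^sub>R B) = c *\<^sub>R (A ** B)"
  by (simp add: matrix_matrix_mult_def vec_eq_iff scaleR_sum_right)

lemma matrix_mult_diff_left:
  "(A - B) ** (C::'a::ring_1^'n^'m) = A ** C - B ** C"
  by (simp add: matrix_matrix_mult_def vec_eq_iff left_diff_distrib sum_subtractf)

lemma sandwich_sum_expand:
  fixes P :: "'k \<Rightarrow> 'a::real_algebra_1^'n^'n"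
  shows "(\<Sum>a\<in>A. x a *\<^sub>R P a) ** X ** (\<Sum>b\<in>B. y b *\<^sub>R P b)
       = (\<Sum>a\<in>A. \<Sum>b\<in>B. (x a * y b) *\<^sub>R (P a ** X ** P b))"
  by (simp add: matrix_mult_sum_left matrix_mult_sum_right matrix_mult_scaleR_left
      matrix_mult_scaleR_right scaleR_sum_right sum.swap[of _ B] mult.commute)

lemma sum_contraction_reindex:
  fixes L :: "'n::finite \<Rightarrow> 'a::real_algebra_1^'m^'m" and G :: "real^'n^'n"
  shows "(\<Sum>nu\<in>UNIV. (\<Sum>mu\<in>UNIV. k mu nu *\<^sub>R L mu) ** (\<Sum>rho\<in>UNIV. G$nu$rho *\<^sub>R L rho))
       = (\<Sum>mu\<in>UNIV. \<Sum>nu\<in>UNIV. (\<Sum>rho\<in>UNIV. k mu rho * G$rho$nu) *\<^sub>R (L mu ** L nu))"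
proof -
  have "(\<Sum>rho\<in>UNIV. (\<Sum>mu\<in>UNIV. k mu rho *\<^sub>R L mu) ** (\<Sum>nu\<in>UNIV. G$rho$nu *\<^sub>R L nu))
      = (\<Sum>rho\<in>UNIV. \<Sum>nu\<in>UNIV. \<Sum>mu\<in>UNIV. (k mu rho * G$rho$nu) *\<^sub>R (L mu ** L nu))"
    by (simp add: matrix_mult_sum_left matrix_mult_sum_right matrix_mult_scaleR_left
        matrix_mult_scaleR_right scaleR_sum_right mult.commute)
  also have "\<dots> = (\<Sum>rho\<in>UNIV. \<Sum>mu\<in>UNIV. \<Sum>nu\<in>UNIV. (k mu rho * G$rho$nu) *\<^sub>R (L mu ** L nu))"
    by (intro sum.cong[OF refl] sum.swap)
  also have "\<dots> = (\<Sum>mu\<in>UNIV. \<Sum>rho\<in>UNIV. \<Sum>nu\<in>UNIV. (k mu rho * G$rho$nu) *\<^sub>R (L mu ** L nu))"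
    by (rule sum.swap)
  also have "\<dots> = (\<Sum>mu\<in>UNIV. \<Sum>nu\<in>UNIV. \<Sum>rho\<in>UNIV. (k mu rho * G$rho$nu) *\<^sub>R (L mu ** L nu))"
    by (intro sum.cong[OF refl] sum.swap)
  also have "\<dots> = (\<Sum>mu\<in>UNIV. \<Sum>nu\<in>UNIV. (\<Sum>rho\<in>UNIV. k mu rho * G$rho$nu) *\<^sub>R (L mu ** L nu))"
    by (simp add: scaleR_sum_left)
  finally show ?thesis .
qed

lemma sum_swap_pairs:
  "(\<Sum>n\<in>A. \<Sum>r\<in>B. \<Sum>a\<in>C. \<Sum>b\<in>D. h n r a b) = (\<Sum>a\<in>C. \<Sum>b\<in>D. \<Sum>n\<in>A. \<Sum>r\<in>B. h n r a b)"
proof -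
  have "(\<Sum>n\<in>A. \<Sum>r\<in>B. \<Sum>a\<in>C. \<Sum>b\<in>D. h n r a b) = (\<Sum>n\<in>A. \<Sum>a\<in>C. \<Sum>r\<in>B. \<Sum>b\<in>D. h n r a b)"
    by (rule sum.cong[OF refl], rule sum.swap)
  also have "\<dots> = (\<Sum>n\<in>A. \<Sum>a\<in>C. \<Sum>b\<in>D. \<Sum>r\<in>B. h n r a b)"
    by (intro sum.cong[OF refl] sum.swap)
  also have "\<dots> = (\<Sum>a\<in>C. \<Sum>n\<in>A. \<Sum>b\<in>D. \<Sum>r\<in>B. h n r a b)"
    by (rule sum.swap)
  also have "\<dots> = (\<Sum>a\<in>C. \<Sum>b\<in>D. \<Sum>n\<in>A. \<Sum>r\<in>B. h n r a b)"
    by (intro sum.cong[OF refl] sum.swap)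
  finally show ?thesis .
qed

lemma sum_congruence:
  fixes G :: "real^'n^'n" and N :: "real^'k^'n" and F :: "'k \<Rightarrow> 'k \<Rightarrow> 'a::real_vector"
  shows "(\<Sum>n\<in>UNIV. \<Sum>r\<in>UNIV. G$n$r *\<^sub>R (\<Sum>a\<in>UNIV. \<Sum>b\<in>UNIV. (N$n$a * N$r$b) *\<^sub>R F a b))
       = (\<Sum>a\<in>UNIV. \<Sum>b\<in>UNIV. (transpose N ** G ** N)$a$b *\<^sub>R F a b)"
proof -
  have entry: "(transpose N ** G ** N)$a$b = (\<Sum>n\<in>UNIV. \<Sum>r\<in>UNIV. G$n$r * (N$n$a * N$r$b))" for a b
  proof -
    have "(transpose N ** G ** N)$a$b = (\<Sum>r\<in>UNIV. \<Sum>n\<in>UNIV. G$n$r * (N$n$a * N$r$b))"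
      by (simp add: matrix_matrix_mult_def transpose_def sum_distrib_left mult_ac)
    also have "\<dots> = (\<Sum>n\<in>UNIV. \<Sum>r\<in>UNIV. G$n$r * (N$n$a * N$r$b))"
      by (rule sum.swap)
    finally show ?thesis .
  qed
  have "(\<Sum>n\<in>UNIV. \<Sum>r\<in>UNIV. G$n$r *\<^sub>R (\<Sum>a\<in>UNIV. \<Sum>b\<in>UNIV. (N$n$a * N$r$b) *\<^sub>R F a b))
      = (\<Sum>n\<in>UNIV. \<Sum>r\<in>UNIV. \<Sum>a\<in>UNIV. \<Sum>b\<in>UNIV. (G$n$r * (N$n$a * N$r$b)) *\<^sub>R F a b)"
    by (simp add: scaleR_sum_right)
  also have "\<dots> = (\<Sum>a\<in>UNIV. \<Sum>b\<in>UNIV. \<Sum>n\<in>UNIV. \<Sum>r\<in>UNIV. (G$n$r * (N$n$a * N$r$b)) *\<^sub>R F a b)"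
    by (rule sum_swap_pairs)
  also have "\<dots> = (\<Sum>a\<in>UNIV. \<Sum>b\<in>UNIV. (transpose N ** G ** N)$a$b *\<^sub>R F a b)"
    by (simp add: entry scaleR_sum_left)
  finally show ?thesis .
qed

lemma congruence_of_inverse:
  fixes N E G Ginv :: "'a::field^'n^'n"
  assumes "N ** E ** transpose N = Ginv" "Ginv ** G = mat 1" "E ** E = mat 1"
  shows "transpose N ** G ** N = E"
proof -
  have "N ** (E ** transpose N ** G) = mat 1"
    using assms(1,2) by (simp add: matrix_mul_assoc)
  then have "E ** (transpose N ** G ** N) = mat 1"
    by (metis matrix_left_right_inverse matrix_mul_assoc)
  then have "E ** E ** (transpose N ** G ** N) = E"
    by (metis matrix_mul_assoc matrix_mul_rid)
  then show ?thesis
    using assms(3) by simp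
qed

lemma matrix_inv_left: "invertible A \<Longrightarrow> matrix_inv A ** A = mat 1"
  unfolding invertible_def matrix_inv_def by (rule someI2_ex) auto

lemma minkowski_mult_self: "minkowski ** minkowski = mat 1"
proof -
  define d :: "4 \<Rightarrow> real" where "d i = (if i = 0 then 1 else -1)" for i
  have diag: "minkowski = (\<chi> i j. if i = j then d i else 0)"
    unfolding minkowski_def d_def by (rule refl)
  have "(if i = k then d i else 0) * (if k = j then d k else 0)
      = (if k = i then (if i = j then 1 else 0) else 0)" for i j k :: 4
    by (simp add: d_def)
  then show ?thesis
    by (simp add: diag matrix_matrix_mult_def mat_def vec_eq_iff)
qed

lemma minkowski_diagonal_sum:
  fixes F :: "4 \<Rightarrow> 4 \<Rightarrow> 'a::real_vector"
  shows "(\<Sum>a\<in>UNIV. \<Sum>b\<in>UNIV. minkowski$a$b *\<^sub>R F a b) = (\<Sum>a\<in>UNIV. minkowski$a$a *\<^sub>R F a a)"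
proof (rule sum.cong[OF refl])
  fix a
  have "(\<Sum>b\<in>UNIV. minkowski$a$b *\<^sub>R F a b)
      = (\<Sum>b\<in>UNIV. if b = a then minkowski$a$a *\<^sub>R F a a else 0)"
    by (rule sum.cong) (auto simp: minkowski_def)
  then show "(\<Sum>b\<in>UNIV. minkowski$a$b *\<^sub>R F a b) = minkowski$a$a *\<^sub>R F a a"
    by simp
qed

lemma lorentzian_metric_ginv:
  assumes "lorentzian_metric U g" "x \<in> U"
  shows "ginv g x ** g x = mat 1"
proof -
  obtain P where "transpose P ** g x ** P = minkowski"
    using assms unfolding lorentzian_metric_def by blast
  then have "det P * det (g x) * det P = det minkowski"
    by (metis det_mul det_transpose)
  moreover have "det minkowski * det minkowski = 1"
    by (metis det_I det_mul minkowski_mult_self)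
  ultimately have "det (g x) \<noteq> 0"
    by auto
  then show ?thesis
    unfolding ginv_def by (simp add: matrix_inv_left invertible_det_nz)
qed

text \<open>sigma^0 = e followed by the standard Pauli matrices; index 0 (which equals 4 in type 4)
  is also the time index of minkowski.\<close>

definition pauli :: "4 \<Rightarrow> cmat" where
  "pauli a = (\<chi> i j.
     if a = 0 then (if i = j then 1 else 0)
     else if a = 1 then (if i = j then 0 else 1)
     else if a = 2 then (if i = j then 0 else if i = 1 then - \<i> else \<i>)
     else (if i = j then (if i = 1 then 1 else -1) else 0))"

lemma pim_pauli: "pim (pauli a) = (if a = 0 then 0 else pauli a)"
  by (simp add: pauli_def pim_def pip_def mtrace_def sum_2 mat_def vec_eq_iff)

lemma linear_pim: "linear pim"
  by (rule linearI) (simp_all add: pim_def pip_def mtrace_def mat_def vec_eq_iff sum.distrib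
      scaleR_sum_right algebra_simps)

lemma pauli_sandwich_sum:
  "pauli 1 ** X ** pauli 1 + pauli 2 ** X ** pauli 2 + pauli 3 ** X ** pauli 3
     = mat (2 * mtrace X) - X"
  by (simp add: pauli_def vec_eq_iff forall_2 sum_2 matrix_matrix_mult_def mtrace_def mat_def
      algebra_simps)

lemma minkowski_pauli_twirl:
  "(\<Sum>a\<in>UNIV. \<Sum>b\<in>UNIV. minkowski$a$b *\<^sub>R (pim (pauli a) ** X ** pim (pauli b)))
     = X - mat (2 * mtrace X)"
proof -
  have "(\<Sum>a\<in>UNIV. \<Sum>b\<in>UNIV. minkowski$a$b *\<^sub>R (pim (pauli a) ** X ** pim (pauli b)))
      = - (pauli 1 ** X ** pauli 1 + pauli 2 ** X ** pauli 2 + pauli 3 ** X ** pauli 3)"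
    by (simp add: minkowski_diagonal_sum sum_4 pim_pauli minkowski_def)
  also have "\<dots> = X - mat (2 * mtrace X)"
    unfolding pauli_sandwich_sum by (rule minus_diff_eq)
  finally show ?thesis .
qed

definition pauli_coords :: "cmat \<Rightarrow> real^4" where
  "pauli_coords A = (\<chi> a.
     if a = 0 then Re (A$1$1 + A$2$2) / 2
     else if a = 1 then Re (A$2$1)
     else if a = 2 then Im (A$2$1)
     else Re (A$1$1 - A$2$2) / 2)"

lemma herm_entries:
  assumes "herm A"
  shows "Im (A$1$1) = 0" "Im (A$2$2) = 0" "A$1$2 = cnj (A$2$1)"
proof -
  have "A$i$j = cnj (A$j$i)" for i j
    using assms unfolding herm_def by blast
  then show "Im (A$1$1) = 0" "Im (A$2$2) = 0" "A$1$2 = cnj (A$2$1)"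
    by (metis cnj.sel(2) neg_equal_zero)+
qed

lemma herm_pauli_expansion:
  assumes "herm A"
  shows "A = (\<Sum>a\<in>UNIV. pauli_coords A $ a *\<^sub>R pauli a)"
  using herm_entries[OF assms]
  by (simp add: vec_eq_iff forall_2 sum_4 pauli_def pauli_coords_def complex_eq_iff field_simps)

lemma herm_clifford_pauli_coords:
  assumes "herm A" "herm B"
  shows "A ** tilde B + B ** tilde A
       = (2 * (pauli_coords A \<bullet> (minkowski *v pauli_coords B))) *\<^sub>R mat 1"
  using herm_entries[OF assms(1)] herm_entries[OF assms(2)]
  by (simp add: vec_eq_iff forall_2 sum_2 sum_4 pauli_coords_def minkowski_def inner_vec_def
      matrix_vector_mult_def matrix_matrix_mult_def tilde_def pip_def pim_def mtrace_def mat_def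
      complex_eq_iff algebra_simps divide_simps)

definition clifford_frame :: "real^4^4 \<Rightarrow> (4 \<Rightarrow> cmat) \<Rightarrow> bool" where
  "clifford_frame Ginv K \<longleftrightarrow> (\<forall>n. herm (K n)) \<and>
     (\<forall>m n. K m ** tilde (K n) + K n ** tilde (K m) = (2 * Ginv$m$n) *\<^sub>R mat 1)"

lemma clifford_frame_pauli_coords:
  assumes "clifford_frame Ginv K"
  shows "(\<chi> n. pauli_coords (K n)) ** minkowski ** transpose (\<chi> n. pauli_coords (K n)) = Ginv"
proof -
  define N where "N = (\<chi> n. pauli_coords (K n))"
  have "(N ** minkowski ** transpose N)$m$n = Ginv$m$n" for m n
  proof -
    have "(N ** minkowski ** transpose N)$m$n
        = (\<Sum>b\<in>UNIV. \<Sum>a\<in>UNIV. N$m$a * minkowski$a$b * N$n$b)"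
      by (simp add: matrix_matrix_mult_def transpose_def sum_distrib_right)
    also have "\<dots> = (\<Sum>a\<in>UNIV. \<Sum>b\<in>UNIV. N$m$a * minkowski$a$b * N$n$b)"
      by (rule sum.swap)
    also have "\<dots> = pauli_coords (K m) \<bullet> (minkowski *v pauli_coords (K n))"
      by (simp add: N_def inner_vec_def matrix_vector_mult_def sum_distrib_left mult_ac)
    finally have entry: "(N ** minkowski ** transpose N)$m$n
        = pauli_coords (K m) \<bullet> (minkowski *v pauli_coords (K n))" .
    have "(2 * (pauli_coords (K m) \<bullet> (minkowski *v pauli_coords (K n)))) *\<^sub>R (mat 1 :: cmat)
        = (2 * Ginv$m$n) *\<^sub>R mat 1"
      using assms herm_clifford_pauli_coords unfolding clifford_frame_def by metis
    then have "((2 * (pauli_coords (K m) \<bullet> (minkowski *v pauli_coords (K n)))) *\<^sub>R (mat 1 :: cmat))$1$1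
        = ((2 * Ginv$m$n) *\<^sub>R (mat 1 :: cmat))$1$1"
      by (simp only:)
    then show ?thesis
      by (simp add: entry mat_def)
  qed
  then show ?thesis
    by (simp add: N_def vec_eq_iff)
qed

lemma clifford_frame_sandwich:
  assumes frame: "clifford_frame Ginv K" and inv: "Ginv ** G = mat 1"
  shows "(\<Sum>n\<in>UNIV. pim (K n) ** X ** (\<Sum>r\<in>UNIV. G$n$r *\<^sub>R pim (K r)))
       = X - mat (2 * mtrace X)"
proof -
  define N where "N = (\<chi> n. pauli_coords (K n))"
  have coords: "pim (K n) = (\<Sum>a\<in>UNIV. N$n$a *\<^sub>R pim (pauli a))" for n
  proof -
    have "herm (K n)"
      using frame by (simp add: clifford_frame_def)
    then have "pim (K n) = pim (\<Sum>a\<in>UNIV. N$n$a *\<^sub>R pauli a)"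
      unfolding N_def by (subst herm_pauli_expansion) simp_all
    then show ?thesis
      by (simp add: linear_sum[OF linear_pim] linear_scale[OF linear_pim] o_def)
  qed
  have metric: "transpose N ** G ** N = minkowski"
    using clifford_frame_pauli_coords[OF frame] inv minkowski_mult_self
    unfolding N_def by (rule congruence_of_inverse)
  have "(\<Sum>n\<in>UNIV. pim (K n) ** X ** (\<Sum>r\<in>UNIV. G$n$r *\<^sub>R pim (K r)))
      = (\<Sum>n\<in>UNIV. \<Sum>r\<in>UNIV. G$n$r *\<^sub>R (pim (K n) ** X ** pim (K r)))"
    by (simp add: matrix_mult_sum_right matrix_mult_scaleR_right)
  also have "\<dots> = (\<Sum>n\<in>UNIV. \<Sum>r\<in>UNIV. G$n$r *\<^sub>R
      (\<Sum>a\<in>UNIV. \<Sum>b\<in>UNIV. (N$n$a * N$r$b) *\<^sub>R (pim (pauli a) ** X ** pim (pauli b))))"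
    by (simp only: coords sandwich_sum_expand)
  also have "\<dots> = (\<Sum>a\<in>UNIV. \<Sum>b\<in>UNIV. minkowski$a$b *\<^sub>R (pim (pauli a) ** X ** pim (pauli b)))"
    by (simp only: sum_congruence metric)
  also have "\<dots> = X - mat (2 * mtrace X)"
    by (rule minkowski_pauli_twirl)
  finally show ?thesis .
qed

lemma clifford_frame_commutator_contraction:
  assumes frame: "clifford_frame Ginv K" and inv: "Ginv ** G = mat 1" and traceless: "mtrace C = 0"
  shows "(\<Sum>nu\<in>UNIV. comm C (pim (K nu)) ** (\<Sum>rho\<in>UNIV. G$nu$rho *\<^sub>R pim (K rho)))
       = (-4) *\<^sub>R C"
proof -
  have "(\<Sum>nu\<in>UNIV. comm C (pim (K nu)) ** (\<Sum>rho\<in>UNIV. G$nu$rho *\<^sub>R pim (K rho)))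
      = C ** (\<Sum>nu\<in>UNIV. pim (K nu) ** mat 1 ** (\<Sum>rho\<in>UNIV. G$nu$rho *\<^sub>R pim (K rho)))
        - (\<Sum>nu\<in>UNIV. pim (K nu) ** C ** (\<Sum>rho\<in>UNIV. G$nu$rho *\<^sub>R pim (K rho)))"
    by (simp add: comm_def matrix_mult_diff_left matrix_mult_sum_right sum_subtractf matrix_mul_assoc)
  also have "\<dots> = C ** (mat 1 - mat (2 * mtrace (mat 1))) - (C - mat (2 * mtrace C))"
    by (simp only: clifford_frame_sandwich[OF frame inv])
  also have "\<dots> = C ** (mat 1 - mat (2 * mtrace (mat 1))) - C"
    using traceless by simp
  also have "\<dots> = (-4) *\<^sub>R C"
    by (simp add: vec_eq_iff forall_2 sum_2 matrix_matrix_mult_def mtrace_def mat_def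
        scaleR_conv_of_real)
  finally show ?thesis .
qed

lemma clifford_frame_connection:
  assumes frame: "clifford_frame Ginv K" and inv: "Ginv ** G = mat 1" and traceless: "mtrace C = 0"
    and parallel: "\<forall>nu. D nu - comm C (pim (K nu)) = (\<Sum>mu\<in>UNIV. k mu nu *\<^sub>R pim (K mu))"
  shows "C = (- 1/4) *\<^sub>R
          ((\<Sum>nu\<in>UNIV. D nu ** (\<Sum>rho\<in>UNIV. G$nu$rho *\<^sub>R pim (K rho)))
         - (\<Sum>mu\<in>UNIV. \<Sum>nu\<in>UNIV.
              (\<Sum>rho\<in>UNIV. k mu rho * G$rho$nu) *\<^sub>R (pim (K mu) ** pim (K nu))))"
proof -
  have "D nu = comm C (pim (K nu)) + (\<Sum>mu\<in>UNIV. k mu nu *\<^sub>R pim (K mu))" for nu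
    using parallel by (metis diff_eq_eq add.commute)
  then have "(\<Sum>nu\<in>UNIV. D nu ** (\<Sum>rho\<in>UNIV. G$nu$rho *\<^sub>R pim (K rho)))
      = (-4) *\<^sub>R C + (\<Sum>mu\<in>UNIV. \<Sum>nu\<in>UNIV.
              (\<Sum>rho\<in>UNIV. k mu rho * G$rho$nu) *\<^sub>R (pim (K mu) ** pim (K nu)))"
    by (simp add: matrix_mult_add_left sum.distrib sum_contraction_reindex
        clifford_frame_commutator_contraction[OF frame inv traceless])
  then show ?thesis
    by simp
qed

theorem theorem2:
  fixes U :: "pt set"
    and g :: "pt \<Rightarrow> real^4^4"
    and tau :: "pt \<Rightarrow> real^4"
    and K :: "pt \<Rightarrow> 4 \<Rightarrow> cmat"
    and C :: "pt \<Rightarrow> 4 \<Rightarrow> cmat"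
    and kappa :: "pt \<Rightarrow> 4 \<Rightarrow> 4 \<Rightarrow> 4 \<Rightarrow> real"
  assumes g: "lorentzian_metric U g"
    and tau_smooth: "\<forall>mu. smooth_on U (\<lambda>x. tau x $ mu)"
    and tau_unit: "\<forall>x\<in>U. (\<Sum>mu\<in>UNIV. \<Sum>nu\<in>UNIV. g x $ mu $ nu * tau x $ mu * tau x $ nu) = 1"
    and K_smooth: "\<forall>nu. smooth_on U (\<lambda>x. K x nu)"
    and K_herm: "\<forall>x\<in>U. \<forall>nu. herm (K x nu)"
    and K_cliff: "\<forall>x\<in>U. \<forall>mu nu. K x mu ** tilde (K x nu) + K x nu ** tilde (K x mu)
                     = (2 * ginv g x $ mu $ nu) *\<^sub>R mat 1"
    and K_div: "\<forall>x\<in>U. (\<Sum>mu\<in>UNIV. covD g (\<lambda>y nu. pip (K y nu)) mu mu x) = 0"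
    and K_plus: "\<forall>x\<in>U. \<forall>nu. pip (K x nu) = tau x $ nu *\<^sub>R mat 1"
    and C_smooth: "\<forall>lam. smooth_on U (\<lambda>x. C x lam)"
    and C_su2: "\<forall>x\<in>U. \<forall>lam. su2 (C x lam)"
    and kappa_smooth: "\<forall>lam mu nu. smooth_on U (\<lambda>x. kappa x lam mu nu)"
    and kappa_trace: "\<forall>x\<in>U. \<forall>mu. (\<Sum>lam\<in>UNIV. kappa x lam mu lam) = 0"
    and kappa_antisym: "\<forall>x\<in>U. \<forall>lam mu nu.
          (\<Sum>rho\<in>UNIV. kappa x lam mu rho * g x $ rho $ nu)
        = - (\<Sum>rho\<in>UNIV. kappa x lam nu rho * g x $ rho $ mu)"
    and eq: "\<forall>x\<in>U. \<forall>lam nu.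
          covD g (\<lambda>y nu. pim (K y nu)) lam nu x - comm (C x lam) (pim (K x nu))
        = (\<Sum>mu\<in>UNIV. kappa x lam mu nu *\<^sub>R pim (K x mu))"
  shows "\<forall>x\<in>U. \<forall>lam. C x lam = (- 1/4) *\<^sub>R
          ((\<Sum>nu\<in>UNIV. covD g (\<lambda>y nu. pim (K y nu)) lam nu x
                ** (\<Sum>rho\<in>UNIV. g x $ nu $ rho *\<^sub>R pim (K x rho)))
         - (\<Sum>mu\<in>UNIV. \<Sum>nu\<in>UNIV.
              (\<Sum>rho\<in>UNIV. kappa x lam mu rho * g x $ rho $ nu) *\<^sub>R (pim (K x mu) ** pim (K x nu))))"
proof (intro ballI allI)
  fix x lam
  assume "x \<in> U"
  have "clifford_frame (ginv g x) (K x)"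
    using K_herm K_cliff \<open>x \<in> U\<close> by (simp add: clifford_frame_def)
  moreover have "ginv g x ** g x = mat 1"
    using g \<open>x \<in> U\<close> by (rule lorentzian_metric_ginv)
  moreover have "mtrace (C x lam) = 0"
    using C_su2 \<open>x \<in> U\<close> by (simp add: su2_def)
  moreover have "\<forall>nu. covD g (\<lambda>y nu. pim (K y nu)) lam nu x - comm (C x lam) (pim (K x nu))
      = (\<Sum>mu\<in>UNIV. kappa x lam mu nu *\<^sub>R pim (K x mu))"
    using eq \<open>x \<in> U\<close> by blast
  ultimately show "C x lam = (- 1/4) *\<^sub>R
          ((\<Sum>nu\<in>UNIV. covD g (\<lambda>y nu. pim (K y nu)) lam nu x
                ** (\<Sum>rho\<in>UNIV. g x $ nu $ rho *\<^sub>R pim (K x rho)))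
         - (\<Sum>mu\<in>UNIV. \<Sum>nu\<in>UNIV.
              (\<Sum>rho\<in>UNIV. kappa x lam mu rho * g x $ rho $ nu) *\<^sub>R (pim (K x mu) ** pim (K x nu))))"
    by (rule clifford_frame_connection)
qed

end
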